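(* Let $1\le k\le N-1$ satisfy $\phi^{k-1}-\phi^k>\phi^k-\phi^{k+1}$, let $F\in\tilde{\mathcal F}^k$, let $\mathcal U$ be an atom of $\mathfrak A_k$, and let $\delta$ be a root of $F$ with $\mathcal U\subseteq\mathcal VT^F_\delta$. Then there exist a set $\mathcal D\subseteq\mathcal VT^F_\delta$ and a forest $G\in\tilde{\mathcal F}^k$ such that the arcs leaving the vertices of $\mathcal N\setminus\mathcal D$ are the same in $G$ and in $F$, $\mathcal U\subseteq\mathcal VT^G_\delta$, and $\mathcal N^{in}_{\mathcal U}(G)=\emptyset$ (no arc of $G$ enters $\mathcal U$).
   Context: $V$ is a digraph with vertex set $\mathcal N$, $|\mathcal N|=N$, real arc weights, having at least one spanning tree. An (entering) forest is a digraph in which every vertex has at most one outgoing arc and there is no directed cycle; its weakly connected components are trees, each with a root (the unique vertex with no outgoing arc). For a root $\delta$ of $F$, $T^F_\delta$ denotes the tree of $F$ containing $\delta$. $\mathcal F^k$ is the set of spanning forests of $V$ with exactly $k$ trees; $\Upsilon^F$ is total arc weight; $\phi^k=\min_{\mathcal F^k}\Upsilon^F$, $\phi^0=\infty$; $\tilde{\mathcal F}^k$ the forests in $\mathcal F^k$ of weight $\phi^k$. $\mathfrak A_k$ is the algebra of subsets of $\mathcal N$ generated by the vertex sets of trees of forests in $\tilde{\mathcal F}^k$; atoms are its minimal nonempty elements. $\mathcal N^{in}_{\mathcal U}(G)$ is the set of tails of arcs of $G$ whose head is in $\mathcal U$ and tail is not. *)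

theory Defs
  imports "HOL-Library.Extended_Real"
begin

text \<open>A weighted digraph is given by a finite vertex set N, an arc set E \<subseteq> N \<times> N
  (arcs are pairs (tail, head)) and a real weight function w on arcs.\<close>

definition is_forest :: "('a \<times> 'a) set \<Rightarrow> ('a \<times> 'a) set \<Rightarrow> bool" where
  "is_forest E F \<longleftrightarrow> F \<subseteq> E \<and> (\<forall>u v v'. (u, v) \<in> F \<longrightarrow> (u, v') \<in> F \<longrightarrow> v = v') \<and> acyclic F"

definition roots :: "'a set \<Rightarrow> ('a \<times> 'a) set \<Rightarrow> 'a set" where
  "roots N F = {v \<in> N. \<forall>u. (v, u) \<notin> F}"

definition forests :: "'a set \<Rightarrow> ('a \<times> 'a) set \<Rightarrow> nat \<Rightarrow> ('a \<times> 'a) set set" where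
  "forests N E k = {F. is_forest E F \<and> card (roots N F) = k}"

definition weight :: "('a \<times> 'a \<Rightarrow> real) \<Rightarrow> ('a \<times> 'a) set \<Rightarrow> real" where
  "weight w F = (\<Sum>a\<in>F. w a)"

text \<open>\<phi>^k = minimal weight over \<F>^k; infimum of the empty set is \<infinity> (so \<phi>^0 = \<infinity>).\<close>
definition phi :: "'a set \<Rightarrow> ('a \<times> 'a) set \<Rightarrow> ('a \<times> 'a \<Rightarrow> real) \<Rightarrow> nat \<Rightarrow> ereal" where
  "phi N E w k = (INF F\<in>forests N E k. ereal (weight w F))"

definition opt_forests :: "'a set \<Rightarrow> ('a \<times> 'a) set \<Rightarrow> ('a \<times> 'a \<Rightarrow> real) \<Rightarrow> nat \<Rightarrow> ('a \<times> 'a) set set" where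
  "opt_forests N E w k = {F \<in> forests N E k. ereal (weight w F) = phi N E w k}"

definition tree_vertices :: "'a set \<Rightarrow> ('a \<times> 'a) set \<Rightarrow> 'a \<Rightarrow> 'a set" where
  "tree_vertices N F \<delta> = {v \<in> N. (v, \<delta>) \<in> F\<^sup>*}"

inductive_set gen_alg :: "'a set \<Rightarrow> 'a set set \<Rightarrow> 'a set set" for N S where
  empty: "{} \<in> gen_alg N S"
| basic: "X \<in> S \<Longrightarrow> X \<in> gen_alg N S"
| compl: "X \<in> gen_alg N S \<Longrightarrow> N - X \<in> gen_alg N S"
| union: "X \<in> gen_alg N S \<Longrightarrow> Y \<in> gen_alg N S \<Longrightarrow> X \<union> Y \<in> gen_alg N S"

definition alg_k :: "'a set \<Rightarrow> ('a \<times> 'a) set \<Rightarrow> ('a \<times> 'a \<Rightarrow> real) \<Rightarrow> nat \<Rightarrow> 'a set set" where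
  "alg_k N E w k = gen_alg N {tree_vertices N F r | F r. F \<in> opt_forests N E w k \<and> r \<in> roots N F}"

definition is_atom :: "'a set set \<Rightarrow> 'a set \<Rightarrow> bool" where
  "is_atom A U \<longleftrightarrow> U \<in> A \<and> U \<noteq> {} \<and> (\<forall>W\<in>A. W \<noteq> {} \<longrightarrow> W \<subseteq> U \<longrightarrow> W = U)"

definition in_nbrs :: "'a set \<Rightarrow> ('a \<times> 'a) set \<Rightarrow> 'a set" where
  "in_nbrs U G = {u. \<exists>v. (u, v) \<in> G \<and> v \<in> U \<and> u \<notin> U}"

end

theory Submission
  imports Defs
begin

text \<open>Two optimal k-forests G and H can exchange the arcs leaving a vertex set X. If both
  results are forests, their root counts add up to 2k and their weights to 2\<phi>^k, so the
  strict concavity gap forbids a split into k+1 and k-1 roots, while a split into k and k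
  roots makes both results optimal. This rigidity forces every tree of an optimal forest to
  contain exactly one root of every other optimal forest. Given an arc (p, q) of G entering
  the atom U, the atom is separated from p by a tree B of some optimal H; replacing the arcs
  of G leaving the ancestors of p outside B by those of H yields a new optimal forest with
  the same roots, which still holds U in the tree of \<delta> and has strictly fewer arcs entering U.
  Iterating, all arcs entering U are removed, and only arcs inside the tree of \<delta> change.\<close>

definition graft :: "'a set \<Rightarrow> ('a \<times> 'a) set \<Rightarrow> ('a \<times> 'a) set \<Rightarrow> ('a \<times> 'a) set" where
  "graft X H G = {a \<in> H. fst a \<in> X} \<union> {a \<in> G. fst a \<notin> X}"

lemma roots_graft: "roots N (graft X H G) = (roots N H \<inter> X) \<union> (roots N G - X)"
  unfolding roots_def graft_def by auto

lemma is_forest_graft: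
  "is_forest E H \<Longrightarrow> is_forest E G \<Longrightarrow> acyclic (graft X H G) \<Longrightarrow> is_forest E (graft X H G)"
  unfolding is_forest_def graft_def by auto

lemma rtrancl_graft_if_avoids:
  assumes "(x, y) \<in> G\<^sup>*" and "\<forall>z. (x, z) \<in> G\<^sup>* \<longrightarrow> z \<notin> X"
  shows "(x, y) \<in> (graft X H G)\<^sup>*"
  using assms
proof (induction rule: converse_rtrancl_induct)
  case (step x x')
  then have "(x, x') \<in> graft X H G" unfolding graft_def by auto
  moreover have "\<forall>z. (x', z) \<in> G\<^sup>* \<longrightarrow> z \<notin> X"
    using step.hyps(1) step.prems by (meson converse_rtrancl_into_rtrancl)
  ultimately show ?case using step.IH by (meson converse_rtrancl_into_rtrancl)
qed simp

text \<open>Outside Z only G-arcs are used and they never enter Z; from X the H-arcs can only stay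
  in X or leave Z; so a cycle lies either outside Z (a G-cycle) or inside X (an H-cycle).\<close>
lemma acyclic_graft:
  assumes "X \<subseteq> Z"
    and G_closed: "\<forall>x y. (x, y) \<in> G \<longrightarrow> x \<notin> Z \<longrightarrow> y \<notin> Z"
    and H_closed: "\<forall>x y. (x, y) \<in> H \<longrightarrow> x \<in> X \<longrightarrow> y \<in> X \<or> y \<notin> Z"
    and "acyclic G" and "acyclic H"
  shows "acyclic (graft X H G)"
proof -
  let ?K = "graft X H G"
  have path: "(x \<notin> Z \<longrightarrow> y \<notin> Z \<and> (x, y) \<in> G\<^sup>+) \<and> (x \<in> X \<longrightarrow> y \<notin> Z \<or> y \<in> X \<and> (x, y) \<in> H\<^sup>+)
      \<and> (x \<in> Z - X \<longrightarrow> y \<in> Z - X \<and> (x, y) \<in> G\<^sup>+ \<or> y \<in> X \<or> y \<notin> Z)"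
    if "(x, y) \<in> ?K\<^sup>+" for x y
    using that
  proof (induction rule: trancl_induct)
    case (base y)
    then show ?case using assms(1) G_closed H_closed unfolding graft_def by auto
  next
    case (step y z)
    show ?case
    proof (cases "y \<in> X")
      case True
      then have "(y, z) \<in> H" using step.hyps(2) unfolding graft_def by auto
      then show ?thesis using step.IH True H_closed assms(1) by (auto intro: trancl_into_trancl)
    next
      case False
      then have "(y, z) \<in> G" using step.hyps(2) unfolding graft_def by auto
      then show ?thesis using step.IH False G_closed assms(1) by (auto intro: trancl_into_trancl)
    qed
  qed
  show ?thesis using path \<open>acyclic G\<close> \<open>acyclic H\<close> unfolding acyclic_def by blast
qed

lemma in_nbrs_graft_subset:
  assumes "\<forall>x y. (x, y) \<in> H \<longrightarrow> x \<in> X \<longrightarrow> y \<notin> U"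
  shows "in_nbrs U (graft X H G) \<subseteq> in_nbrs U G - X"
  using assms unfolding in_nbrs_def graft_def by auto

lemma gen_alg_subset: "X \<in> gen_alg N S \<Longrightarrow> \<forall>Y\<in>S. Y \<subseteq> N \<Longrightarrow> X \<subseteq> N"
  by (induction rule: gen_alg.induct) auto

lemma gen_alg_Int:
  assumes "X \<in> gen_alg N S" "Y \<in> gen_alg N S" "X \<subseteq> N" "Y \<subseteq> N"
  shows "X \<inter> Y \<in> gen_alg N S"
proof -
  have "X \<inter> Y = N - ((N - X) \<union> (N - Y))" using assms by auto
  then show ?thesis using assms gen_alg.intros by metis
qed

lemma gen_alg_mem_iff_if_not_separated:
  "X \<in> gen_alg N S \<Longrightarrow> x \<in> N \<Longrightarrow> y \<in> N \<Longrightarrow> \<forall>Y\<in>S. x \<in> Y \<longleftrightarrow> y \<in> Y \<Longrightarrow> x \<in> X \<longleftrightarrow> y \<in> X"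
  by (induction rule: gen_alg.induct) auto

lemma rtrancl_from_root: "(r, y) \<in> G\<^sup>* \<Longrightarrow> \<forall>u. (r, u) \<notin> G \<Longrightarrow> y = r"
  by (erule converse_rtranclE) auto

locale finite_digraph =
  fixes N :: "'a set" and E :: "('a \<times> 'a) set"
  assumes finite_N: "finite N" and arcs_subset: "E \<subseteq> N \<times> N"
begin

lemma forest_subset: "is_forest E G \<Longrightarrow> G \<subseteq> N \<times> N"
  using arcs_subset unfolding is_forest_def by auto

lemma finite_forest: "is_forest E G \<Longrightarrow> finite G"
  using forest_subset finite_N by (meson finite_SigmaI finite_subset)

lemma forest_arc_unique: "is_forest E G \<Longrightarrow> (x, y) \<in> G \<Longrightarrow> (x, z) \<in> G \<Longrightarrow> y = z"
  unfolding is_forest_def by blast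

lemma forest_acyclic: "is_forest E G \<Longrightarrow> acyclic G"
  unfolding is_forest_def by blast

lemma finite_roots: "finite (roots N G)"
  using finite_N unfolding roots_def by auto

lemma card_roots_graft_add:
  "card (roots N (graft X H G)) + card (roots N (graft X G H)) = card (roots N H) + card (roots N G)"
proof -
  have split: "card A = card (A \<inter> X) + card (A - X)" if "finite A" for A :: "'a set"
    using that by (metis Int_Diff_Un Int_Diff_disjoint card_Un_disjoint finite_Diff finite_Int)
  have "card (roots N (graft X H G)) = card (roots N H \<inter> X) + card (roots N G - X)"
    "card (roots N (graft X G H)) = card (roots N G \<inter> X) + card (roots N H - X)"
    unfolding roots_graft using finite_roots by (subst card_Un_disjoint; auto)+
  then show ?thesis using split[OF finite_roots] split[OF finite_roots] by simp
qed

lemma weight_graft_add: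
  assumes "is_forest E G" "is_forest E H"
  shows "weight w (graft X H G) + weight w (graft X G H) = weight w G + weight w H"
proof -
  have "finite G" "finite H" using assms finite_forest by auto
  have split: "weight w A = weight w {a \<in> A. fst a \<in> X} + weight w {a \<in> A. fst a \<notin> X}"
    if "finite A" for A
    unfolding weight_def using that by (subst sum.union_disjoint[symmetric]) (auto intro: sum.cong)
  have "weight w (graft X H G) = weight w {a \<in> H. fst a \<in> X} + weight w {a \<in> G. fst a \<notin> X}"
    "weight w (graft X G H) = weight w {a \<in> G. fst a \<in> X} + weight w {a \<in> H. fst a \<notin> X}"
    unfolding graft_def weight_def using \<open>finite G\<close> \<open>finite H\<close>
    by (subst sum.union_disjoint; auto)+
  then show ?thesis using split[OF \<open>finite G\<close>] split[OF \<open>finite H\<close>] by simp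
qed

lemma root_unique:
  assumes "is_forest E G"
  shows "(v, r1) \<in> G\<^sup>* \<Longrightarrow> (v, r2) \<in> G\<^sup>* \<Longrightarrow> \<forall>u. (r1, u) \<notin> G \<Longrightarrow> \<forall>u. (r2, u) \<notin> G \<Longrightarrow> r1 = r2"
proof (induction v rule: converse_rtrancl_induct)
  case base
  then show ?case using rtrancl_from_root by metis
next
  case (step v v')
  from step.prems(1) have "(v', r2) \<in> G\<^sup>*"
  proof (cases rule: converse_rtranclE)
    case base
    then show ?thesis using step.hyps(1) step.prems(3) by auto
  next
    case (step z)
    then show ?thesis using forest_arc_unique[OF assms] \<open>(v, v') \<in> G\<close> by metis
  qed
  then show ?case using step.IH step.prems by blast
qed

lemma exists_root_reachable:
  assumes "is_forest E G" and "v \<in> N"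
  shows "\<exists>r\<in>roots N G. (v, r) \<in> G\<^sup>*"
proof -
  have "wf (G\<inverse>)"
    using finite_acyclic_wf_converse finite_forest[OF assms(1)] forest_acyclic[OF assms(1)] by blast
  then show ?thesis using \<open>v \<in> N\<close>
  proof (induction v rule: wf_induct_rule)
    case (less v)
    show ?case
    proof (cases "\<exists>y. (v, y) \<in> G")
      case True
      then obtain y where y: "(v, y) \<in> G" by blast
      then have "y \<in> N" using forest_subset[OF assms(1)] by auto
      with less y obtain r where "r \<in> roots N G" "(y, r) \<in> G\<^sup>*" by blast
      then show ?thesis using y by (meson converse_rtrancl_into_rtrancl)
    next
      case False
      then show ?thesis using less unfolding roots_def by auto
    qed
  qed
qed

lemma tree_vertices_arc_in:
  "is_forest E G \<Longrightarrow> (x, y) \<in> G \<Longrightarrow> y \<in> tree_vertices N G r \<Longrightarrow> x \<in> tree_vertices N G r"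
  unfolding tree_vertices_def using forest_subset by (auto intro: converse_rtrancl_into_rtrancl)

lemma tree_vertices_arc_out:
  assumes "is_forest E G" and "r \<in> roots N G" and "x \<in> tree_vertices N G r" and "(x, y) \<in> G"
  shows "y \<in> tree_vertices N G r"
proof -
  have "(x, r) \<in> G\<^sup>*" using assms(3) unfolding tree_vertices_def by auto
  then show ?thesis
  proof (cases rule: converse_rtranclE)
    case base
    then show ?thesis using assms(2,4) unfolding roots_def by auto
  next
    case (step z)
    then have "z = y" using forest_arc_unique[OF assms(1)] assms(4) by blast
    then show ?thesis using step forest_subset[OF assms(1)] assms(4) unfolding tree_vertices_def by auto
  qed
qed

lemma root_in_tree_vertices: "r \<in> roots N G \<Longrightarrow> r \<in> tree_vertices N G r"
  unfolding roots_def tree_vertices_def by auto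

lemma roots_Int_tree_vertices: "r \<in> roots N G \<Longrightarrow> roots N G \<inter> tree_vertices N G r = {r}"
  using rtrancl_from_root[of _ r G] root_in_tree_vertices[of r G]
  unfolding roots_def tree_vertices_def by blast

lemma tree_vertices_disjoint:
  assumes "is_forest E G" "r1 \<in> roots N G" "r2 \<in> roots N G" "r1 \<noteq> r2"
  shows "tree_vertices N G r1 \<inter> tree_vertices N G r2 = {}"
  using root_unique[OF assms(1)] assms unfolding tree_vertices_def roots_def by blast

text \<open>A G-path starting outside the tree of \<delta> in F uses only F-arcs, and F-arcs never enter
  that tree from outside.\<close>
lemma tree_vertices_subset_if_arcs_agree:
  assumes "is_forest E F" and "\<delta> \<in> roots N F"
    and agree: "{a \<in> G. fst a \<in> N - tree_vertices N F \<delta>} = {a \<in> F. fst a \<in> N - tree_vertices N F \<delta>}"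
  shows "tree_vertices N G \<delta> \<subseteq> tree_vertices N F \<delta>"
proof
  let ?T = "tree_vertices N F \<delta>"
  have outside: "y \<notin> ?T" if "(x, y) \<in> G\<^sup>*" "x \<in> N" "x \<notin> ?T" for x y
    using that
  proof (induction rule: converse_rtrancl_induct)
    case (step x x')
    then have "(x, x') \<in> {a \<in> G. fst a \<in> N - ?T}" by simp
    then have "(x, x') \<in> F" unfolding agree by simp
    then have "x' \<in> N" "x' \<notin> ?T"
      using step.prems forest_subset[OF assms(1)] tree_vertices_arc_in[OF assms(1)] by blast+
    then show ?case using step.IH by blast
  qed simp
  fix x assume "x \<in> tree_vertices N G \<delta>"
  then show "x \<in> ?T"
    using outside root_in_tree_vertices[OF assms(2)] unfolding tree_vertices_def by blast
qed

lemma in_nbrs_subset: "is_forest E G \<Longrightarrow> in_nbrs U G \<subseteq> N"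
  unfolding in_nbrs_def using forest_subset by blast

lemma ancestors_subset_tree_vertices:
  assumes "is_forest E G" and "p \<in> tree_vertices N G r"
  shows "{x. (x, p) \<in> G\<^sup>*} \<subseteq> tree_vertices N G r"
proof
  fix x assume "x \<in> {x. (x, p) \<in> G\<^sup>*}"
  then have "(x, p) \<in> G\<^sup>*" by simp
  then show "x \<in> tree_vertices N G r"
    by (induction rule: converse_rtrancl_induct)
      (use assms tree_vertices_arc_in[OF assms(1)] in blast)+
qed

lemma ancestor_not_root:
  assumes "(p, q) \<in> G" and "(r, p) \<in> G\<^sup>*"
  shows "r \<notin> roots N G"
proof
  assume r: "r \<in> roots N G"
  have "p = r" by (rule rtrancl_from_root[OF assms(2)]) (use r in \<open>simp add: roots_def\<close>)
  then show False using assms(1) r unfolding roots_def by auto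
qed

lemma ancestor_not_reachable_from_successor:
  assumes "is_forest E G" and "(p, q) \<in> G" and "(q, z) \<in> G\<^sup>*"
  shows "(z, p) \<notin> G\<^sup>*"
proof
  assume "(z, p) \<in> G\<^sup>*"
  then have "(p, p) \<in> G\<^sup>+" using assms(2,3) by (meson rtrancl_into_trancl2 rtrancl_trans)
  then show False using forest_acyclic[OF assms(1)] unfolding acyclic_def by blast
qed

text \<open>The ancestors of p outside the tree B of H take their arcs from H: those arcs never
  enter B, and G-arcs from ancestors of p stay among them or, at p, enter B; so neither
  exchange closes a cycle.\<close>
lemma acyclic_graft_ancestors:
  assumes fG: "is_forest E G" and fH: "is_forest E H" and s: "s \<in> roots N H"
    and pq: "(p, q) \<in> G" and q: "q \<in> tree_vertices N H s"
    and X_def: "X = {x. (x, p) \<in> G\<^sup>*} - tree_vertices N H s"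
  shows "acyclic (graft X H G)" "acyclic (graft X G H)"
proof -
  let ?B = "tree_vertices N H s" and ?S = "{x. (x, p) \<in> G\<^sup>*}"
  show "acyclic (graft X H G)"
  proof (rule acyclic_graft[of X ?S])
    show "\<forall>x y. (x, y) \<in> G \<longrightarrow> x \<notin> ?S \<longrightarrow> y \<notin> ?S"
      by (auto intro: converse_rtrancl_into_rtrancl)
    show "\<forall>x y. (x, y) \<in> H \<longrightarrow> x \<in> X \<longrightarrow> y \<in> X \<or> y \<notin> ?S"
      using tree_vertices_arc_in[OF fH] unfolding X_def by blast
  qed (use forest_acyclic fG fH X_def in auto)
  have G_from_X: "y \<in> X \<or> y \<in> ?B" if "(x, y) \<in> G" "x \<in> X" for x y
  proof (cases "x = p")
    case True
    then show ?thesis using forest_arc_unique[OF fG] that(1) pq q by blast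
  next
    case False
    have "(x, p) \<in> G\<^sup>*" using that(2) unfolding X_def by auto
    then have "(y, p) \<in> G\<^sup>*"
      by (cases rule: converse_rtranclE) (use False forest_arc_unique[OF fG] that(1) in auto)
    then show ?thesis unfolding X_def by auto
  qed
  show "acyclic (graft X G H)"
  proof (rule acyclic_graft[of X "- ?B"])
    show "\<forall>x y. (x, y) \<in> H \<longrightarrow> x \<notin> - ?B \<longrightarrow> y \<notin> - ?B"
      using tree_vertices_arc_out[OF fH s] by blast
  qed (use G_from_X forest_acyclic fG fH X_def in auto)
qed

end

locale concave_gap = finite_digraph N E
  for N :: "'a set" and E :: "('a \<times> 'a) set" +
  fixes w :: "'a \<times> 'a \<Rightarrow> real" and k :: nat
  assumes k_ge_1: "1 \<le> k"
    and gap: "phi N E w (k - 1) - phi N E w k > phi N E w k - phi N E w (k + 1)"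
begin

abbreviation opt :: "('a \<times> 'a) set set" where
  "opt \<equiv> opt_forests N E w k"

lemma opt_forest: "G \<in> opt \<Longrightarrow> is_forest E G"
  unfolding opt_forests_def forests_def by auto

lemma card_roots_opt: "G \<in> opt \<Longrightarrow> card (roots N G) = k"
  unfolding opt_forests_def forests_def by auto

lemma phi_eq_weight_opt: "G \<in> opt \<Longrightarrow> phi N E w k = ereal (weight w G)"
  unfolding opt_forests_def by auto

lemma phi_le_weight: "K \<in> forests N E j \<Longrightarrow> phi N E w j \<le> ereal (weight w K)"
  unfolding phi_def by (rule INF_lower)

lemma exchange_forests:
  assumes G: "G \<in> opt" and H: "H \<in> opt" and "acyclic (graft X H G)" "acyclic (graft X G H)"
  shows "is_forest E (graft X H G)" "is_forest E (graft X G H)"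
    "card (roots N (graft X H G)) + card (roots N (graft X G H)) = 2 * k"
    "weight w (graft X H G) + weight w (graft X G H) = 2 * weight w G"
proof -
  have "is_forest E G" "is_forest E H" using G H opt_forest by auto
  then show "is_forest E (graft X H G)" "is_forest E (graft X G H)"
    using is_forest_graft assms(3,4) by auto
  show "card (roots N (graft X H G)) + card (roots N (graft X G H)) = 2 * k"
    using card_roots_graft_add[of X H G] card_roots_opt[OF G] card_roots_opt[OF H] by simp
  show "weight w (graft X H G) + weight w (graft X G H) = 2 * weight w G"
    using weight_graft_add[OF \<open>is_forest E G\<close> \<open>is_forest E H\<close>, of w X]
      phi_eq_weight_opt[OF G] phi_eq_weight_opt[OF H] by simp
qed

lemma exchange_card_roots_ne_Suc:
  assumes G: "G \<in> opt" and H: "H \<in> opt"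
    and "acyclic (graft X H G)" "acyclic (graft X G H)"
  shows "card (roots N (graft X H G)) \<noteq> k + 1"
proof
  let ?K1 = "graft X H G" and ?K2 = "graft X G H"
  assume "card (roots N ?K1) = k + 1"
  with exchange_forests[OF assms] have "?K1 \<in> forests N E (k + 1)" "?K2 \<in> forests N E (k - 1)"
    unfolding forests_def by auto
  then have phi_Suc: "phi N E w (k + 1) \<le> ereal (weight w ?K1)"
    and phi_pred: "phi N E w (k - 1) \<le> ereal (weight w ?K2)"
    by (auto intro: phi_le_weight)
  have phi_k: "phi N E w k = ereal (weight w G)" using phi_eq_weight_opt[OF G] .
  have "phi N E w (k - 1) - phi N E w k \<le> ereal (weight w ?K2) - ereal (weight w G)"
    unfolding phi_k by (rule ereal_minus_mono[OF phi_pred order_refl])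
  also have "\<dots> = ereal (weight w G) - ereal (weight w ?K1)"
    using exchange_forests(4)[OF assms] by simp
  also have "\<dots> \<le> phi N E w k - phi N E w (k + 1)"
    unfolding phi_k by (rule ereal_minus_mono[OF order_refl phi_Suc])
  finally show False using gap by simp
qed

lemma exchange_card_roots_ne_pred:
  assumes "G \<in> opt" "H \<in> opt" "acyclic (graft X H G)" "acyclic (graft X G H)"
  shows "card (roots N (graft X H G)) \<noteq> k - 1"
  using exchange_card_roots_ne_Suc[OF assms(2,1,4,3)] exchange_forests(3)[OF assms] k_ge_1 by auto

lemma exchange_opt:
  assumes G: "G \<in> opt" and H: "H \<in> opt"
    and "acyclic (graft X H G)" "acyclic (graft X G H)" and "card (roots N (graft X H G)) = k"
  shows "graft X H G \<in> opt"
proof -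
  let ?K1 = "graft X H G" and ?K2 = "graft X G H"
  have "?K1 \<in> forests N E k" "?K2 \<in> forests N E k"
    using exchange_forests[OF assms(1-4)] assms(5) unfolding forests_def by auto
  then have "weight w G \<le> weight w ?K1" "weight w G \<le> weight w ?K2"
    using phi_le_weight[of _ k] phi_eq_weight_opt[OF G] by simp_all
  then have "ereal (weight w ?K1) = phi N E w k"
    using exchange_forests(4)[OF assms(1-4)] phi_eq_weight_opt[OF G] by simp
  then show ?thesis using \<open>?K1 \<in> forests N E k\<close> unfolding opt_forests_def by simp
qed

text \<open>Otherwise H's arcs could replace G's on that tree, leaving a forest with k-1 roots.\<close>
lemma opt_tree_contains_root:
  assumes G: "G \<in> opt" and H: "H \<in> opt" and r: "r \<in> roots N G"
  shows "roots N H \<inter> tree_vertices N G r \<noteq> {}"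
proof
  assume no_root: "roots N H \<inter> tree_vertices N G r = {}"
  let ?A = "tree_vertices N G r"
  have fG: "is_forest E G" and fH: "is_forest E H" using G H opt_forest by auto
  have "acyclic (graft ?A H G)"
    by (rule acyclic_graft[of ?A ?A])
      (use tree_vertices_arc_in[OF fG] forest_acyclic[OF fG] forest_acyclic[OF fH] in blast)+
  moreover have "acyclic (graft ?A G H)"
    by (rule acyclic_graft[of ?A UNIV])
      (use tree_vertices_arc_out[OF fG r] forest_acyclic[OF fG] forest_acyclic[OF fH] in blast)+
  moreover have "roots N (graft ?A H G) = roots N G - {r}"
    unfolding roots_graft using no_root roots_Int_tree_vertices[OF r] by auto
  then have "card (roots N (graft ?A H G)) = k - 1"
    using card_roots_opt[OF G] r finite_roots by simp
  ultimately show False using exchange_card_roots_ne_pred[OF G H] by blast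
qed

lemma card_roots_Int_opt_tree:
  assumes G: "G \<in> opt" and H: "H \<in> opt" and r0: "r0 \<in> roots N G"
  shows "card (roots N H \<inter> tree_vertices N G r0) = 1"
proof (rule ccontr)
  assume "card (roots N H \<inter> tree_vertices N G r0) \<noteq> 1"
  have fG: "is_forest E G" using G opt_forest by auto
  let ?c = "\<lambda>r. card (roots N H \<inter> tree_vertices N G r)"
  have ge1: "?c r \<ge> 1" if "r \<in> roots N G" for r
    using opt_tree_contains_root[OF G H that] finite_roots by (simp add: Suc_leI card_gt_0_iff)
  have ge2: "?c r0 \<ge> 2" using ge1[OF r0] \<open>?c r0 \<noteq> 1\<close> by simp
  have "card (roots N H) = card (\<Union>r\<in>roots N G. roots N H \<inter> tree_vertices N G r)"
    using exists_root_reachable[OF fG] unfolding tree_vertices_def roots_def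
    by (intro arg_cong[where f = card]) blast
  also have "\<dots> = (\<Sum>r\<in>roots N G. ?c r)"
    by (rule card_UN_disjoint) (use finite_roots tree_vertices_disjoint[OF fG] in auto)
  also have "\<dots> = ?c r0 + (\<Sum>r\<in>roots N G - {r0}. ?c r)"
    using finite_roots r0 by (simp add: sum.remove)
  also have "\<dots> \<ge> 2 + (\<Sum>r\<in>roots N G - {r0}. 1)"
    using ge2 ge1 by (intro add_mono sum_mono) auto
  finally have "card (roots N H) \<ge> 2 + (card (roots N G) - 1)"
    using r0 finite_roots by simp
  then show False using card_roots_opt[OF G] card_roots_opt[OF H] k_ge_1 by simp
qed

lemma tree_vertices_in_alg_k: "G \<in> opt \<Longrightarrow> r \<in> roots N G \<Longrightarrow> tree_vertices N G r \<in> alg_k N E w k"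
  unfolding alg_k_def by (auto intro: gen_alg.basic)

lemma alg_k_subset: "X \<in> alg_k N E w k \<Longrightarrow> X \<subseteq> N"
  unfolding alg_k_def by (erule gen_alg_subset) (auto simp: tree_vertices_def)

lemma atom_subset_tree_vertices:
  assumes atom: "is_atom (alg_k N E w k) U" and "G \<in> opt" and "r \<in> roots N G"
    and "U \<inter> tree_vertices N G r \<noteq> {}"
  shows "U \<subseteq> tree_vertices N G r"
proof -
  let ?T = "tree_vertices N G r"
  have U: "U \<in> alg_k N E w k" using atom unfolding is_atom_def by auto
  have T: "?T \<in> alg_k N E w k" using tree_vertices_in_alg_k assms(2,3) .
  have "U \<inter> ?T \<in> alg_k N E w k"
    using gen_alg_Int U T alg_k_subset[OF U] alg_k_subset[OF T] unfolding alg_k_def by blast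
  then have "U \<inter> ?T = U" using atom assms(4) unfolding is_atom_def by auto
  then show ?thesis by auto
qed

lemma atom_separated_by_tree:
  assumes atom: "is_atom (alg_k N E w k) U" and "p \<in> N" "p \<notin> U"
  obtains H s where "H \<in> opt" "s \<in> roots N H" "U \<subseteq> tree_vertices N H s" "p \<notin> tree_vertices N H s"
proof -
  have U: "U \<in> alg_k N E w k" and "U \<noteq> {}" using atom unfolding is_atom_def by auto
  then obtain u where u: "u \<in> U" "u \<in> N" using alg_k_subset by blast
  then obtain H r where H: "H \<in> opt" and r: "r \<in> roots N H"
    and sep: "\<not> (u \<in> tree_vertices N H r \<longleftrightarrow> p \<in> tree_vertices N H r)"
    using gen_alg_mem_iff_if_not_separated[OF U[unfolded alg_k_def] u(2) assms(2)] assms(3)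
    by blast
  have fH: "is_forest E H" using H opt_forest by auto
  obtain s where s: "s \<in> roots N H" "(u, s) \<in> H\<^sup>*" using exists_root_reachable[OF fH u(2)] by blast
  then have "u \<in> tree_vertices N H s" using u unfolding tree_vertices_def by auto
  then have "U \<subseteq> tree_vertices N H s" using atom_subset_tree_vertices[OF atom H s(1)] u by blast
  moreover have "p \<notin> tree_vertices N H s"
    using sep tree_vertices_disjoint[OF fH r s(1)] \<open>u \<in> tree_vertices N H s\<close> by blast
  ultimately show ?thesis using that H s by blast
qed

text \<open>A root of H among the vertices X, none of which is a root of G, would give the exchanged
  forest k+1 roots, because the tree of G containing X holds only one root of H.\<close>
lemma exchange_adds_no_root:
  assumes G: "G \<in> opt" and H: "H \<in> opt"
    and acyclic: "acyclic (graft X H G)" "acyclic (graft X G H)"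
    and r: "r \<in> roots N G" and X: "X \<subseteq> tree_vertices N G r" and "roots N G \<inter> X = {}"
  shows "roots N H \<inter> X = {}"
proof (rule ccontr)
  assume "roots N H \<inter> X \<noteq> {}"
  then have "card (roots N H \<inter> X) > 0" using finite_roots by (simp add: card_gt_0_iff)
  moreover have "roots N H \<inter> X \<subseteq> roots N H \<inter> tree_vertices N G r" using X by auto
  then have "card (roots N H \<inter> X) \<le> 1"
    using card_roots_Int_opt_tree[OF G H r] card_mono finite_roots by (metis finite_Int)
  ultimately have "card (roots N H \<inter> X) = 1" by simp
  moreover have "roots N (graft X H G) = (roots N H \<inter> X) \<union> roots N G"
    unfolding roots_graft using \<open>roots N G \<inter> X = {}\<close> by auto
  moreover have "card ((roots N H \<inter> X) \<union> roots N G) = card (roots N H \<inter> X) + card (roots N G)"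
    by (rule card_Un_disjoint) (use finite_roots \<open>roots N G \<inter> X = {}\<close> in auto)
  ultimately have "card (roots N (graft X H G)) = k + 1" using card_roots_opt[OF G] by simp
  then show False using exchange_card_roots_ne_Suc[OF G H acyclic] by simp
qed

lemma exists_opt_forest_fewer_in_nbrs:
  assumes atom: "is_atom (alg_k N E w k) U" and G: "G \<in> opt" and \<delta>: "\<delta> \<in> roots N G"
    and U: "U \<subseteq> tree_vertices N G \<delta>" and p: "p \<in> in_nbrs U G"
  obtains G' where "G' \<in> opt"
    "{a \<in> G'. fst a \<notin> tree_vertices N G \<delta>} = {a \<in> G. fst a \<notin> tree_vertices N G \<delta>}"
    "\<delta> \<in> roots N G'" "U \<subseteq> tree_vertices N G' \<delta>" "in_nbrs U G' \<subset> in_nbrs U G"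
proof -
  have fG: "is_forest E G" using G opt_forest by auto
  obtain q where pq: "(p, q) \<in> G" and "q \<in> U" "p \<notin> U" using p unfolding in_nbrs_def by auto
  have "p \<in> N" "q \<in> N" using pq forest_subset[OF fG] by auto
  obtain H s where H: "H \<in> opt" and s: "s \<in> roots N H" and UB: "U \<subseteq> tree_vertices N H s"
    and pB: "p \<notin> tree_vertices N H s"
    using atom_separated_by_tree[OF atom \<open>p \<in> N\<close> \<open>p \<notin> U\<close>] by blast
  have fH: "is_forest E H" using H opt_forest by auto
  have qB: "q \<in> tree_vertices N H s" using UB \<open>q \<in> U\<close> by blast
  let ?A = "tree_vertices N G \<delta>"
  define X where "X = {x. (x, p) \<in> G\<^sup>*} - tree_vertices N H s"
  define G' where "G' = graft X H G"
  note acyclic = acyclic_graft_ancestors[OF fG fH s pq qB X_def]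
  have "p \<in> ?A" using tree_vertices_arc_in[OF fG pq] U \<open>q \<in> U\<close> by blast
  then have XA: "X \<subseteq> ?A" using ancestors_subset_tree_vertices[OF fG] unfolding X_def by blast
  have roots_G_X: "roots N G \<inter> X = {}" using ancestor_not_root[OF pq] unfolding X_def by blast
  then have "roots N H \<inter> X = {}" by (rule exchange_adds_no_root[OF G H acyclic \<delta> XA])
  then have roots_G': "roots N G' = roots N G" unfolding G'_def roots_graft using roots_G_X by auto
  then have "card (roots N G') = k" using card_roots_opt[OF G] by simp
  then have G': "G' \<in> opt" unfolding G'_def by (rule exchange_opt[OF G H acyclic])
  have \<delta>': "\<delta> \<in> roots N G'" using roots_G' \<delta> by simp
  have avoids: "\<forall>z. (q, z) \<in> G\<^sup>* \<longrightarrow> z \<notin> X"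
    using ancestor_not_reachable_from_successor[OF fG pq] unfolding X_def by blast
  have "(q, \<delta>) \<in> G\<^sup>*" using U \<open>q \<in> U\<close> unfolding tree_vertices_def by auto
  then have "(q, \<delta>) \<in> G'\<^sup>*" unfolding G'_def using avoids by (rule rtrancl_graft_if_avoids)
  then have "q \<in> tree_vertices N G' \<delta>" using \<open>q \<in> N\<close> unfolding tree_vertices_def by simp
  then have "U \<inter> tree_vertices N G' \<delta> \<noteq> {}" using \<open>q \<in> U\<close> by blast
  then have "U \<subseteq> tree_vertices N G' \<delta>" by (rule atom_subset_tree_vertices[OF atom G' \<delta>'])
  moreover have "\<forall>x y. (x, y) \<in> H \<longrightarrow> x \<in> X \<longrightarrow> y \<notin> U"
    using tree_vertices_arc_in[OF fH] UB unfolding X_def by blast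
  then have "in_nbrs U G' \<subseteq> in_nbrs U G - X" unfolding G'_def by (rule in_nbrs_graft_subset)
  then have "in_nbrs U G' \<subset> in_nbrs U G" using p pB unfolding X_def by blast
  moreover have "{a \<in> G'. fst a \<notin> ?A} = {a \<in> G. fst a \<notin> ?A}"
    using XA unfolding G'_def graft_def by auto
  ultimately show ?thesis using that G' \<delta>' by blast
qed

lemma exists_opt_forest_no_in_nbrs:
  assumes atom: "is_atom (alg_k N E w k) U" and F: "F \<in> opt" and \<delta>: "\<delta> \<in> roots N F"
    and U: "U \<subseteq> tree_vertices N F \<delta>"
  shows "\<exists>G. G \<in> opt
    \<and> {a \<in> G. fst a \<in> N - tree_vertices N F \<delta>} = {a \<in> F. fst a \<in> N - tree_vertices N F \<delta>}
    \<and> \<delta> \<in> roots N G \<and> U \<subseteq> tree_vertices N G \<delta> \<and> in_nbrs U G = {}"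
proof -
  let ?T = "tree_vertices N F \<delta>"
  define P where "P G \<longleftrightarrow> G \<in> opt \<and> {a \<in> G. fst a \<in> N - ?T} = {a \<in> F. fst a \<in> N - ?T}
      \<and> \<delta> \<in> roots N G \<and> U \<subseteq> tree_vertices N G \<delta>" for G
  have "\<exists>G'. P G' \<and> in_nbrs U G' = {}" if "P G" for G
    using that
  proof (induction "card (in_nbrs U G)" arbitrary: G rule: less_induct)
    case less
    then have G: "G \<in> opt" and agree: "{a \<in> G. fst a \<in> N - ?T} = {a \<in> F. fst a \<in> N - ?T}"
      and \<delta>G: "\<delta> \<in> roots N G" and UG: "U \<subseteq> tree_vertices N G \<delta>"
      unfolding P_def by auto
    show ?case
    proof (cases "in_nbrs U G = {}")
      case False
      then obtain p where "p \<in> in_nbrs U G" by blast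
      then obtain G' where G': "G' \<in> opt"
        and agree': "{a \<in> G'. fst a \<notin> tree_vertices N G \<delta>} = {a \<in> G. fst a \<notin> tree_vertices N G \<delta>}"
        and \<delta>G': "\<delta> \<in> roots N G'" and UG': "U \<subseteq> tree_vertices N G' \<delta>"
        and fewer: "in_nbrs U G' \<subset> in_nbrs U G"
        using exists_opt_forest_fewer_in_nbrs[OF atom G \<delta>G UG] by blast
      have "tree_vertices N G \<delta> \<subseteq> ?T"
        using tree_vertices_subset_if_arcs_agree[OF opt_forest[OF F] \<delta> agree] .
      then have "{a \<in> G'. fst a \<in> N - ?T} = {a \<in> G. fst a \<in> N - ?T}"
        using agree' by blast
      then have "P G'" unfolding P_def using G' agree \<delta>G' UG' by simp
      moreover have "finite (in_nbrs U G)"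
        using finite_subset[OF in_nbrs_subset[OF opt_forest[OF G]] finite_N] .
      then have "card (in_nbrs U G') < card (in_nbrs U G)" using fewer by (rule psubset_card_mono)
      ultimately show ?thesis using less.hyps by blast
    qed (use less.prems in blast)
  qed
  moreover have "P F" unfolding P_def using F \<delta> U by auto
  ultimately show ?thesis unfolding P_def by blast
qed

end

theorem theorem4:
  fixes N :: "'a set" and E :: "('a \<times> 'a) set" and w :: "'a \<times> 'a \<Rightarrow> real"
    and k :: nat and F :: "('a \<times> 'a) set" and U :: "'a set" and \<delta> :: 'a
  assumes "finite N" and "E \<subseteq> N \<times> N"
    and "forests N E 1 \<noteq> {}"
    and "1 \<le> k" and "k \<le> card N - 1"
    and "phi N E w (k - 1) - phi N E w k > phi N E w k - phi N E w (k + 1)"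
    and "F \<in> opt_forests N E w k"
    and "is_atom (alg_k N E w k) U"
    and "\<delta> \<in> roots N F" and "U \<subseteq> tree_vertices N F \<delta>"
  shows "\<exists>D G. D \<subseteq> tree_vertices N F \<delta> \<and> G \<in> opt_forests N E w k
      \<and> {a \<in> G. fst a \<in> N - D} = {a \<in> F. fst a \<in> N - D}
      \<and> \<delta> \<in> roots N G \<and> U \<subseteq> tree_vertices N G \<delta> \<and> in_nbrs U G = {}"
proof -
  interpret concave_gap N E w k
    using assms(1,2,4,6) by unfold_locales auto
  show ?thesis
    using exists_opt_forest_no_in_nbrs[OF assms(8,7,9,10)] by blast
qed

end
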